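(* Let $n\ge d\ge2$ and let $\mathcal{C}$ be a $d$-uniform clutter on $[n]$ which is both chordal and co-chordal. Then for all $i\ge1$, \[ \lambda_i(\mathcal{C})\le\binom{n-1-i}{d-2}. \]
   Context: $\mathcal{C}_{n,d}$ is the set of all $d$-subsets of $[n]$; a $d$-uniform clutter on $[n]$ is a subset of $\mathcal{C}_{n,d}$. Submaximal circuit: a $(d-1)$-set contained in some circuit. Clique: a set all of whose $d$-subsets are circuits. $\mathrm{N}_{\mathcal{C}}(e)=\{c: e\cup\{c\}\in\mathcal{C}\}$, $\mathrm{N}_{\mathcal{C}}[e]=e\cup\mathrm{N}_{\mathcal{C}}(e)$; $e$ is simplicial if it is a submaximal circuit and $\mathrm{N}_{\mathcal{C}}[e]$ is a clique. $\mathcal{C}\setminus e=\{F\in\mathcal{C}:e\not\subset F\}$; $\mathcal{C}_{e_1\cdots e_i}$ is successive deletion. A simplicial sequence in $\mathcal{C}$ is $e_1,\ldots,e_t$ with $e_1$ simplicial in $\mathcal{C}$ and $e_i$ simplicial in $\mathcal{C}_{e_1\cdots e_{i-1}}$ for $i>1$; a simplicial order is a simplicial sequence $e_1,\ldots,e_r$ with $\mathcal{C}_{e_1\cdots e_r}=\emptyset$, and $\mathcal{C}$ is chordal if one exists. $\mathcal{C}$ is co-chordal if there is a simplicial sequence $e_1,\ldots,e_r$ in $\mathcal{C}_{n,d}$ with $\mathcal{C}=(\mathcal{C}_{n,d})_{e_1\cdots e_r}$. For chordal $\mathcal{C}$, its multiset is $\{N_1,\ldots,N_r\}$ with $N_i=|\mathrm{N}_{\mathcal{C}_{e_1\cdots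 e_{i-1}}}(e_i)|$ for a simplicial order (independent of the order), and $\lambda_i(\mathcal{C})=|\{j:N_j=i\}|$. Binomial coefficients $\binom{a}{b}$ with $a<b$ or $a<0$ are $0$. *)

theory Defs
  imports Main
begin

definition Cnd :: "nat \<Rightarrow> nat \<Rightarrow> nat set set" where
  "Cnd n d = {F. F \<subseteq> {1..n} \<and> card F = d}"

definition submax_circuit :: "nat \<Rightarrow> nat set set \<Rightarrow> nat set \<Rightarrow> bool" where
  "submax_circuit d C e \<longleftrightarrow> card e = d - 1 \<and> (\<exists>F\<in>C. e \<subseteq> F)"

definition is_clique :: "nat \<Rightarrow> nat set set \<Rightarrow> nat set \<Rightarrow> bool" where
  "is_clique d C K \<longleftrightarrow> (\<forall>F. F \<subseteq> K \<and> card F = d \<longrightarrow> F \<in> C)"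

definition nbhd :: "nat set set \<Rightarrow> nat set \<Rightarrow> nat set" where
  "nbhd C e = {c. e \<union> {c} \<in> C}"

definition cnbhd :: "nat set set \<Rightarrow> nat set \<Rightarrow> nat set" where
  "cnbhd C e = e \<union> nbhd C e"

definition simplicial :: "nat \<Rightarrow> nat set set \<Rightarrow> nat set \<Rightarrow> bool" where
  "simplicial d C e \<longleftrightarrow> submax_circuit d C e \<and> is_clique d C (cnbhd C e)"

definition del :: "nat set set \<Rightarrow> nat set \<Rightarrow> nat set set" where
  "del C e = {F\<in>C. \<not> e \<subseteq> F}"

definition del_seq :: "nat set set \<Rightarrow> nat set list \<Rightarrow> nat set set" where
  "del_seq C es = fold (\<lambda>e D. del D e) es C"

fun simp_seq :: "nat \<Rightarrow> nat set set \<Rightarrow> nat set list \<Rightarrow> bool" where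
  "simp_seq d C [] = True"
| "simp_seq d C (e # es) = (simplicial d C e \<and> simp_seq d (del C e) es)"

definition simp_order :: "nat \<Rightarrow> nat set set \<Rightarrow> nat set list \<Rightarrow> bool" where
  "simp_order d C es \<longleftrightarrow> simp_seq d C es \<and> del_seq C es = {}"

definition chordal :: "nat \<Rightarrow> nat set set \<Rightarrow> bool" where
  "chordal d C \<longleftrightarrow> (\<exists>es. simp_order d C es)"

definition cochordal :: "nat \<Rightarrow> nat \<Rightarrow> nat set set \<Rightarrow> bool" where
  "cochordal n d C \<longleftrightarrow> (\<exists>es. simp_seq d (Cnd n d) es \<and> C = del_seq (Cnd n d) es)"

definition Nseq :: "nat set set \<Rightarrow> nat set list \<Rightarrow> nat \<Rightarrow> nat" where
  "Nseq C es j = card (nbhd (del_seq C (take j es)) (es ! j))"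

definition lambda_cl :: "nat set set \<Rightarrow> nat set list \<Rightarrow> nat \<Rightarrow> nat" where
  "lambda_cl C es i = card {j. j < length es \<and> Nseq C es j = i}"

definition binom0 :: "int \<Rightarrow> nat \<Rightarrow> nat" where
  "binom0 a b = (if a < 0 then 0 else nat a choose b)"

end

theory Submission
  imports Defs
begin

text \<open>For m \<ge> d, deleting a simplicial (d-1)-set e from a clutter destroys exactly the
  m-cliques containing e, and these are e \<union> B for the (m-d+1)-subsets B of N(e).
  Since a cochordal C is reached from the complete clutter by a simplicial sequence,
  appending a simplicial order of C gives a simplicial order of the complete clutter,
  along which the numbers of destroyed m-cliques add up to n choose m. Writing
  k = m - d + 1, the neighbourhood sizes N_j of any simplicial order of the complete
  clutter therefore satisfy \<Sum>j. (N_j choose k) = n choose (k + d - 1) for all k \<ge> 1.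
  These binomial moments determine the multiplicities \<lambda>_i (i \<ge> 1) uniquely, and
  the upper Vandermonde identity shows that \<lambda>_i = (n-1-i choose d-2) is a solution.
  The values N_j of the order of C occur among those of the concatenated order.\<close>

lemma vandermonde_upper:
  "(\<Sum>i<n. (i choose a) * ((n - 1 - i) choose b)) = n choose (a + b + 1)"
proof (induction n arbitrary: b)
  case 0
  then show ?case by simp
next
  case (Suc n)
  show ?case
  proof (cases b)
    case 0
    have "(\<Sum>i<Suc n. (i choose a) * ((Suc n - 1 - i) choose b)) = (\<Sum>i\<le>n. i choose a)"
      using 0 by (simp add: lessThan_Suc_atMost)
    also have "\<dots> = Suc n choose Suc a"
      by (rule sum_choose_upper)
    finally show ?thesis
      using 0 by simp
  next
    case (Suc b')
    have "(\<Sum>i<Suc n. (i choose a) * ((Suc n - 1 - i) choose b))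
        = (\<Sum>i<n. (i choose a) * ((n - i) choose b))"
      using Suc by simp
    also have "\<dots> = (\<Sum>i<n. (i choose a) * ((n - 1 - i) choose b)
                           + (i choose a) * ((n - 1 - i) choose b'))"
    proof (rule sum.cong)
      fix i
      assume "i \<in> {..<n}"
      then have "n - i = Suc (n - 1 - i)"
        by auto
      then show "(i choose a) * ((n - i) choose b)
          = (i choose a) * ((n - 1 - i) choose b) + (i choose a) * ((n - 1 - i) choose b')"
        using Suc by (simp add: algebra_simps)
    qed simp
    also have "\<dots> = (n choose (a + b + 1)) + (n choose (a + b' + 1))"
      using Suc.IH[of b] Suc.IH[of b'] by (simp add: sum.distrib)
    also have "\<dots> = Suc n choose (a + b + 1)"
      using Suc by simp
    finally show ?thesis .
  qed
qed

text \<open>The matrix (i choose k) is unitriangular, so the moments determine the sequence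
  by downward induction on k.\<close>

lemma eq_if_binomial_moments_eq:
  fixes \<mu> \<nu> :: "nat \<Rightarrow> nat"
  assumes "\<And>i. n < i \<Longrightarrow> \<mu> i = 0" and "\<And>i. n < i \<Longrightarrow> \<nu> i = 0"
    and moments: "\<And>k. 1 \<le> k \<Longrightarrow> (\<Sum>i\<le>n. \<mu> i * (i choose k)) = (\<Sum>i\<le>n. \<nu> i * (i choose k))"
    and "1 \<le> k"
  shows "\<mu> k = \<nu> k"
  using \<open>1 \<le> k\<close>
proof (induction "n - k" arbitrary: k rule: less_induct)
  case less
  show ?case
  proof (cases "k \<le> n")
    case False
    then show ?thesis
      using assms(1,2) by simp
  next
    case True
    have split: "(\<Sum>i\<le>n. f i * (i choose k)) = f k + (\<Sum>i=Suc k..n. f i * (i choose k))"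
      for f :: "nat \<Rightarrow> nat"
    proof -
      have "{..n} = {..<k} \<union> {k..n}"
        using True by auto
      then have "(\<Sum>i\<le>n. f i * (i choose k))
          = (\<Sum>i<k. f i * (i choose k)) + (\<Sum>i=k..n. f i * (i choose k))"
        by (simp add: sum.union_disjoint ivl_disj_int)
      also have "(\<Sum>i=k..n. f i * (i choose k))
          = f k * (k choose k) + (\<Sum>i=Suc k..n. f i * (i choose k))"
        using True by (rule sum.atLeast_Suc_atMost)
      finally show ?thesis
        by simp
    qed
    have "(\<Sum>i=Suc k..n. \<mu> i * (i choose k)) = (\<Sum>i=Suc k..n. \<nu> i * (i choose k))"
      by (rule sum.cong) (use less in auto)
    then show ?thesis
      using moments[OF less.prems] split[of \<mu>] split[of \<nu>] by simp
  qed
qed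

lemma del_seq_Nil [simp]: "del_seq D [] = D"
  by (simp add: del_seq_def)

lemma del_seq_Cons: "del_seq D (g # gs) = del_seq (del D g) gs"
  by (simp add: del_seq_def)

lemma del_seq_append: "del_seq D (xs @ ys) = del_seq (del_seq D xs) ys"
  by (simp add: del_seq_def)

lemma del_seq_subset: "del_seq D gs \<subseteq> D"
  by (induction gs arbitrary: D) (auto simp: del_seq_Cons del_def)

lemma simp_seq_append:
  "simp_seq d D (xs @ ys) \<longleftrightarrow> simp_seq d D xs \<and> simp_seq d (del_seq D xs) ys"
  by (induction xs arbitrary: D) (auto simp: del_seq_Cons)

lemma simp_order_append:
  assumes "simp_seq d D es" and "simp_order d (del_seq D es) fs"
  shows "simp_order d D (es @ fs)"
  using assms by (simp add: simp_order_def simp_seq_append del_seq_append)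

lemma Nseq_append: "Nseq D (xs @ ys) (length xs + j) = Nseq (del_seq D xs) ys j"
  by (simp add: Nseq_def del_seq_append)

lemma lambda_cl_le_lambda_cl_append:
  "lambda_cl (del_seq D es) fs i \<le> lambda_cl D (es @ fs) i"
  unfolding lambda_cl_def
proof (rule card_inj_on_le[where f = "\<lambda>j. length es + j"])
  show "(\<lambda>j. length es + j) ` {j. j < length fs \<and> Nseq (del_seq D es) fs j = i}
      \<subseteq> {j. j < length (es @ fs) \<and> Nseq D (es @ fs) j = i}"
    using Nseq_append[of D es fs] by auto
qed (auto simp: inj_on_def)

lemma nbhd_subset: "D \<subseteq> Cnd n d \<Longrightarrow> nbhd D g \<subseteq> {1..n}"
  unfolding nbhd_def Cnd_def by auto

lemma Nseq_le:
  assumes "D \<subseteq> Cnd n d"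
  shows "Nseq D gs j \<le> n"
proof -
  have "nbhd (del_seq D (take j gs)) (gs ! j) \<subseteq> {1..n}"
    using del_seq_subset assms by (metis nbhd_subset order.trans)
  then show ?thesis
    unfolding Nseq_def using card_mono[of "{1..n}"] by fastforce
qed

definition cliques :: "nat \<Rightarrow> nat \<Rightarrow> nat set set \<Rightarrow> nat \<Rightarrow> nat set set" where
  "cliques n d D m = {S. S \<subseteq> {1..n} \<and> card S = m \<and> is_clique d D S}"

lemma finite_cliques: "finite (cliques n d D m)"
  by (rule finite_subset[of _ "Pow {1..n}"]) (auto simp: cliques_def)

lemma cliques_empty:
  assumes "d \<le> m"
  shows "cliques n d {} m = {}"
proof -
  have "\<not> is_clique d {} S" if "card S = m" for S
    using obtain_subset_with_card_n[of d S] that assms unfolding is_clique_def by auto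
  then show ?thesis
    unfolding cliques_def by auto
qed

lemma card_cliques_Cnd: "card (cliques n d (Cnd n d) m) = n choose m"
proof -
  have "cliques n d (Cnd n d) m = {S. S \<subseteq> {1..n} \<and> card S = m}"
    unfolding cliques_def is_clique_def Cnd_def by auto
  then show ?thesis
    using n_subsets[of "{1..n}" m] by simp
qed

lemma submax_circuit_subset:
  "D \<subseteq> Cnd n d \<Longrightarrow> submax_circuit d D g \<Longrightarrow> g \<subseteq> {1..n}"
  unfolding submax_circuit_def Cnd_def by auto

lemma cliques_del:
  assumes "finite g" and "card g = d - 1" and "1 \<le> d" and "d \<le> m"
  shows "cliques n d (del D g) m = {S \<in> cliques n d D m. \<not> g \<subseteq> S}"
proof (intro set_eqI iffI)
  fix S
  assume S: "S \<in> cliques n d (del D g) m"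
  then have clique: "is_clique d (del D g) S"
    unfolding cliques_def by auto
  have "\<not> g \<subseteq> S"
  proof
    assume "g \<subseteq> S"
    moreover have "card g < card S"
      using S assms unfolding cliques_def by simp
    ultimately obtain c where "c \<in> S" "c \<notin> g"
      using card_mono[OF \<open>finite g\<close>] by (metis not_le subsetI)
    then have "g \<union> {c} \<in> del D g"
      using clique \<open>g \<subseteq> S\<close> assms unfolding is_clique_def by simp
    then show False
      unfolding del_def by auto
  qed
  then show "S \<in> {S \<in> cliques n d D m. \<not> g \<subseteq> S}"
    using S unfolding cliques_def is_clique_def del_def by auto
next
  fix S
  assume "S \<in> {S \<in> cliques n d D m. \<not> g \<subseteq> S}"
  then show "S \<in> cliques n d (del D g) m"
    unfolding cliques_def is_clique_def del_def by auto
qed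

lemma disjoint_nbhd:
  assumes "D \<subseteq> Cnd n d" and "card g = d - 1" and "1 \<le> d"
  shows "g \<inter> nbhd D g = {}"
proof -
  have "g \<union> {c} \<noteq> g" if "c \<in> nbhd D g" for c
    using that assms unfolding nbhd_def Cnd_def by auto
  then show ?thesis
    by auto
qed

lemma cliques_containing_simplicial:
  assumes D: "D \<subseteq> Cnd n d" and "simplicial d D g" and "1 \<le> d" and "d \<le> m"
  shows "{S \<in> cliques n d D m. g \<subseteq> S}
    = (\<union>) g ` {B. B \<subseteq> nbhd D g \<and> card B = m - (d - 1)}"
proof -
  from \<open>simplicial d D g\<close> have "card g = d - 1"
      and clique: "is_clique d D (g \<union> nbhd D g)"
    unfolding simplicial_def submax_circuit_def cnbhd_def by auto
  have g: "g \<subseteq> {1..n}"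
    using submax_circuit_subset[OF D] \<open>simplicial d D g\<close> unfolding simplicial_def by blast
  then have "finite g"
    using finite_subset by auto
  have card_insert: "card (g \<union> {c}) = d" if "c \<notin> g" for c
    using that \<open>finite g\<close> \<open>card g = d - 1\<close> \<open>1 \<le> d\<close> by simp
  have disjoint: "g \<inter> nbhd D g = {}"
    using disjoint_nbhd[OF D \<open>card g = d - 1\<close> \<open>1 \<le> d\<close>] .
  show ?thesis
  proof (intro set_eqI iffI)
    fix S
    assume "S \<in> {S \<in> cliques n d D m. g \<subseteq> S}"
    then have S: "S \<subseteq> {1..n}" "card S = m" "is_clique d D S" "g \<subseteq> S"
      unfolding cliques_def by auto
    have "S - g \<subseteq> nbhd D g"
      using S card_insert unfolding is_clique_def nbhd_def by auto
    moreover have "card (S - g) = m - (d - 1)"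
      using card_Diff_subset[OF \<open>finite g\<close> \<open>g \<subseteq> S\<close>] S \<open>card g = d - 1\<close> by simp
    moreover have "S = g \<union> (S - g)"
      using S by auto
    ultimately show "S \<in> (\<union>) g ` {B. B \<subseteq> nbhd D g \<and> card B = m - (d - 1)}"
      by blast
  next
    fix S
    assume "S \<in> (\<union>) g ` {B. B \<subseteq> nbhd D g \<and> card B = m - (d - 1)}"
    then obtain B where B: "B \<subseteq> nbhd D g" "card B = m - (d - 1)" and S: "S = g \<union> B"
      by auto
    have "finite B"
      using B nbhd_subset[OF D] finite_subset by (metis finite_atLeastAtMost order.trans)
    moreover have "g \<inter> B = {}"
      using B disjoint by auto
    ultimately have "card S = m"
      using S B card_Un_disjoint[OF \<open>finite g\<close>] \<open>card g = d - 1\<close> assms(3,4)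
      by simp
    moreover have "S \<subseteq> {1..n}"
      using S B g nbhd_subset[OF D] by auto
    moreover have "is_clique d D S"
      using clique S B unfolding is_clique_def by auto
    ultimately show "S \<in> {S \<in> cliques n d D m. g \<subseteq> S}"
      unfolding cliques_def using S by auto
  qed
qed

lemma card_cliques_del_simplicial:
  assumes D: "D \<subseteq> Cnd n d" and g: "simplicial d D g" and "1 \<le> d" and "d \<le> m"
  shows "card (cliques n d D m)
    = card (cliques n d (del D g) m) + (card (nbhd D g) choose (m - (d - 1)))"
proof -
  from g have "card g = d - 1"
    unfolding simplicial_def submax_circuit_def by auto
  have "g \<subseteq> {1..n}"
    using submax_circuit_subset[OF D] g unfolding simplicial_def by blast
  then have "finite g"
    using finite_subset by auto
  have "finite (nbhd D g)"
    using nbhd_subset[OF D] finite_subset by blast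
  have "inj_on ((\<union>) g) {B. B \<subseteq> nbhd D g \<and> card B = m - (d - 1)}"
    using disjoint_nbhd[OF D \<open>card g = d - 1\<close> \<open>1 \<le> d\<close>] by (auto intro!: inj_onI)
  then have "card {S \<in> cliques n d D m. g \<subseteq> S}
      = card {B. B \<subseteq> nbhd D g \<and> card B = m - (d - 1)}"
    unfolding cliques_containing_simplicial[OF assms] by (rule card_image)
  also have "\<dots> = card (nbhd D g) choose (m - (d - 1))"
    using \<open>finite (nbhd D g)\<close> by (rule n_subsets)
  finally have "card {S \<in> cliques n d D m. g \<subseteq> S} = card (nbhd D g) choose (m - (d - 1))" .
  moreover have "card (cliques n d D m)
      = card ({S \<in> cliques n d D m. \<not> g \<subseteq> S} \<union> {S \<in> cliques n d D m. g \<subseteq> S})"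
    by (rule arg_cong[where f = card]) auto
  moreover have "\<dots> = card {S \<in> cliques n d D m. \<not> g \<subseteq> S} + card {S \<in> cliques n d D m. g \<subseteq> S}"
    by (rule card_Un_disjoint) (auto simp: finite_cliques)
  ultimately show ?thesis
    using cliques_del[OF \<open>finite g\<close> \<open>card g = d - 1\<close> \<open>1 \<le> d\<close> \<open>d \<le> m\<close>] by simp
qed

lemma card_cliques_del_seq:
  assumes "D \<subseteq> Cnd n d" and "simp_seq d D gs" and "1 \<le> d" and "d \<le> m"
  shows "card (cliques n d D m)
    = card (cliques n d (del_seq D gs) m) + (\<Sum>j<length gs. Nseq D gs j choose (m - (d - 1)))"
  using assms(1,2)
proof (induction gs arbitrary: D)
  case Nil
  then show ?case by simp
next
  case (Cons g gs)
  then have g: "simplicial d D g" and gs: "simp_seq d (del D g) gs"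
    by auto
  have "del D g \<subseteq> Cnd n d"
    using Cons.prems(1) unfolding del_def by auto
  moreover have "Nseq D (g # gs) 0 = card (nbhd D g)"
    by (simp add: Nseq_def)
  moreover have "Nseq D (g # gs) (Suc j) = Nseq (del D g) gs j" for j
    by (simp add: Nseq_def del_seq_Cons)
  ultimately have "(\<Sum>j<length (g # gs). Nseq D (g # gs) j choose (m - (d - 1)))
      = (card (nbhd D g) choose (m - (d - 1)))
        + (\<Sum>j<length gs. Nseq (del D g) gs j choose (m - (d - 1)))"
    by (simp only: length_Cons sum.lessThan_Suc_shift)
  then show ?case
    using card_cliques_del_simplicial[OF Cons.prems(1) g assms(3,4)] Cons.IH[OF _ gs]
      \<open>del D g \<subseteq> Cnd n d\<close> by (simp add: del_seq_Cons)
qed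

lemma sum_choose_Nseq_Cnd:
  assumes "simp_order d (Cnd n d) gs" and "1 \<le> d" and "1 \<le> k"
  shows "(\<Sum>j<length gs. Nseq (Cnd n d) gs j choose k) = n choose (k + d - 1)"
  using card_cliques_del_seq[of "Cnd n d" n d gs "k + d - 1"] assms cliques_empty card_cliques_Cnd
  unfolding simp_order_def by simp

lemma lambda_cl_Cnd:
  assumes "simp_order d (Cnd n d) gs" and "2 \<le> d" and "1 \<le> i"
  shows "lambda_cl (Cnd n d) gs i = binom0 (int n - 1 - int i) (d - 2)"
proof -
  define N where "N = Nseq (Cnd n d) gs"
  define \<nu> where "\<nu> i = binom0 (int n - 1 - int i) (d - 2)" for i
  have N_le: "N j \<le> n" for j
    unfolding N_def by (rule Nseq_le[of _ n d]) simp
  have "(\<Sum>i\<le>n. lambda_cl (Cnd n d) gs i * (i choose k)) = (\<Sum>i\<le>n. \<nu> i * (i choose k))"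
    if "1 \<le> k" for k
  proof -
    have "(\<Sum>i\<le>n. lambda_cl (Cnd n d) gs i * (i choose k))
        = (\<Sum>i\<le>n. \<Sum>j\<in>{j \<in> {..<length gs}. N j = i}. N j choose k)"
      unfolding lambda_cl_def N_def by (intro sum.cong) auto
    also have "\<dots> = (\<Sum>j<length gs. N j choose k)"
      by (rule sum.group) (use N_le in auto)
    also have "\<dots> = n choose (k + (d - 2) + 1)"
    proof -
      have "k + (d - 2) + 1 = k + d - 1"
        using \<open>2 \<le> d\<close> by simp
      then show ?thesis
        using sum_choose_Nseq_Cnd[OF assms(1) _ that] \<open>2 \<le> d\<close> unfolding N_def by simp
    qed
    also have "\<dots> = (\<Sum>i<n. (i choose k) * ((n - 1 - i) choose (d - 2)))"
      by (rule vandermonde_upper[symmetric])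
    also have "\<dots> = (\<Sum>i\<le>n. \<nu> i * (i choose k))"
      by (simp add: lessThan_Suc_atMost[symmetric] \<nu>_def binom0_def nat_diff_distrib
          mult.commute)
    finally show ?thesis .
  qed
  moreover have "lambda_cl (Cnd n d) gs i = 0" if "n < i" for i
    using N_le[THEN leD] that unfolding lambda_cl_def N_def by auto
  moreover have "\<nu> i = 0" if "n < i" for i
    using that unfolding \<nu>_def binom0_def by simp
  ultimately show ?thesis
    using eq_if_binomial_moments_eq[where \<mu> = "lambda_cl (Cnd n d) gs" and \<nu> = \<nu>] \<open>1 \<le> i\<close>
    unfolding \<nu>_def by blast
qed

theorem corollary4p8:
  fixes n d :: nat and C :: "nat set set"
  assumes "2 \<le> d" and "d \<le> n"
    and "C \<subseteq> Cnd n d"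
    and "chordal d C" and "cochordal n d C"
  shows "\<forall>es. simp_order d C es \<longrightarrow>
           (\<forall>i\<ge>1. lambda_cl C es i \<le> binom0 (int n - 1 - int i) (d - 2))"
proof (intro allI impI)
  fix fs and i :: nat
  assume fs: "simp_order d C fs" and "1 \<le> i"
  obtain es where es: "simp_seq d (Cnd n d) es" and C: "C = del_seq (Cnd n d) es"
    using \<open>cochordal n d C\<close> unfolding cochordal_def by auto
  have "lambda_cl C fs i \<le> lambda_cl (Cnd n d) (es @ fs) i"
    unfolding C by (rule lambda_cl_le_lambda_cl_append)
  also have "\<dots> = binom0 (int n - 1 - int i) (d - 2)"
    using simp_order_append[OF es fs[unfolded C]] \<open>2 \<le> d\<close> \<open>1 \<le> i\<close> by (rule lambda_cl_Cnd)
  finally show "lambda_cl C fs i \<le> binom0 (int n - 1 - int i) (d - 2)" .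
qed

end
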